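(* Let $F$ be an $F_\sigma$ subset of $[0,1]$ with $0\in F$, and let $k\geq 3$ be an integer. Then there exist non-empty, convex and closed subsets $A_1,A_2,\dots,A_k\subset\mathbb R^3$ such that $$F=\{\alpha\in[0,1]:P_{A_k}^\alpha P_{A_{k-1}}^\alpha\cdots P_{A_1}^\alpha\text{ has a fixed point}\}.$$
   Context: For a non-empty, convex, closed subset $A$ of a real Hilbert space $H$ (here $H=\mathbb R^3$ with the Euclidean inner product), $P_A:H\to A$ denotes the metric (nearest-point) projection onto $A$. For $\alpha\in[0,1]$, the $\alpha$-relaxed projection onto $A$ is the map $P_A^\alpha:H\to H$, $P_A^\alpha(x)=\alpha P_A(x)+(1-\alpha)x$. Compositions are written as products. *)

theory Defs
  imports "HOL-Analysis.Analysis"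
begin

definition relaxed_proj :: "real \<Rightarrow> ('a::euclidean_space) set \<Rightarrow> 'a \<Rightarrow> 'a" where
  "relaxed_proj \<alpha> A x = \<alpha> *\<^sub>R closest_point A x + (1 - \<alpha>) *\<^sub>R x"

text \<open>comp_relaxed \<alpha> A n = P_{A n}^\<alpha> \<circ> ... \<circ> P_{A 1}^\<alpha> (A 1 applied first).\<close>
fun comp_relaxed :: "real \<Rightarrow> (nat \<Rightarrow> ('a::euclidean_space) set) \<Rightarrow> nat \<Rightarrow> 'a \<Rightarrow> 'a" where
  "comp_relaxed \<alpha> A 0 = id"
| "comp_relaxed \<alpha> A (Suc n) = relaxed_proj \<alpha> (A (Suc n)) \<circ> comp_relaxed \<alpha> A n"

end

theory Submission
  imports Defs
begin

text \<open>
  Write F as a union of closed sets C j. We take for A 1 and A 2 the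
  vertical lines through (0,0,0) and (4,0,0), for A 3 a closed convex set tower C,
  and A i = UNIV for i > 3, which does not change the composition. Horizontally the
  first two relaxed projections act as the contraction h \<mapsto> \<alpha> (4,0) + (1 - \<alpha>)^2 h,
  heights are preserved. For 0 < \<alpha> \<le> 1 a fixed point x with projection a onto
  A 3 is determined by a (it is balance \<alpha> a), and the residual is a positive multiple
  of pole \<alpha> - horiz a. Hence, if the horizontal shadow of A 3 lies between the open
  and the closed unit disc around (3,2), a fixed point exists iff A 3 meets the
  vertical line over touch \<alpha>, the point of the circle nearest to pole \<alpha>
  (locale disc_shadow). Finally tower C is cut out of the solid cylinder by
  half-spaces so that it meets the line over touch \<alpha> iff \<alpha> lies in some
  finite stage {0} \<union> C 0 \<union> ... \<union> C n; the parameter \<alpha> = 0 is trivial.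
\<close>

lemma closest_point_eqI:
  fixes S :: "'a::euclidean_space set"
  assumes "convex S" "closed S" "y \<in> S" "\<And>z. z \<in> S \<Longrightarrow> inner (x - y) (z - y) \<le> 0"
  shows "closest_point S x = y"
proof -
  have "dist x y \<le> dist x z" if "z \<in> S" for z
  proof -
    have "(dist x z)\<^sup>2 = (dist x y)\<^sup>2 + (norm (z - y))\<^sup>2 - 2 * inner (x - y) (z - y)"
      unfolding dist_norm power2_norm_eq_inner
      by (simp add: inner_commute algebra_simps)
    then have "(dist x y)\<^sup>2 \<le> (dist x z)\<^sup>2"
      using assms(4)[OF that] zero_le_power2[of "norm (z - y)"] by linarith
    then show ?thesis by (simp add: power2_le_iff_abs_le)
  qed
  then show ?thesis using closest_point_unique[OF assms(1-3)] by metis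
qed

lemma relaxed_proj_UNIV: "relaxed_proj \<alpha> UNIV = id"
  by (rule ext) (simp add: relaxed_proj_def closest_point_self algebra_simps)

text \<open>Trailing sets equal to the whole space do not change a composition of relaxed
  projections; this lets us realise any number k \<ge> 3 of sets with three of them.\<close>
lemma comp_relaxed_UNIV_tail:
  assumes "\<And>i. m < i \<Longrightarrow> A i = UNIV" and "m \<le> k"
  shows "comp_relaxed \<alpha> A k = comp_relaxed \<alpha> A m"
  using assms(2)
proof (induction k rule: dec_induct)
  case (step n)
  then show ?case using assms(1)[of "Suc n"] by (simp add: relaxed_proj_UNIV)
qed simp

lemma comp_relaxed_zero: "comp_relaxed 0 A k = id"
  by (induction k) (simp_all add: relaxed_proj_def fun_eq_iff)

lemma inner_unit_sphere:
  fixes c u v :: "'a::real_inner"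
  assumes "norm (u - c) = 1" "norm (v - c) = 1"
  shows "inner (u - c) (v - c) = 1 - (dist u v)\<^sup>2 / 2"
proof -
  have "(dist u v)\<^sup>2 = (norm (u - c))\<^sup>2 + (norm (v - c))\<^sup>2 - 2 * inner (u - c) (v - c)"
    unfolding dist_norm power2_norm_eq_inner by (simp add: inner_commute algebra_simps)
  then show ?thesis using assms by (simp add: field_simps)
qed

text \<open>The radial point e of the unit sphere in the direction of an outside point
  q is the projection of q onto the closed unit ball.\<close>
lemma radial_point_obtuse:
  fixes c q p :: "'a::real_inner"
  assumes "1 \<le> norm (q - c)" "norm (p - c) \<le> 1"
  defines "e \<equiv> c + (1 / norm (q - c)) *\<^sub>R (q - c)"
  shows "inner (q - e) (p - e) \<le> 0"
proof -
  define r where "r = norm (q - c)"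
  have r: "1 \<le> r" using assms(1) r_def by simp
  have e_c: "e - c = (1 / r) *\<^sub>R (q - c)" by (simp add: e_def r_def)
  have unit: "norm (e - c) = 1" using r r_def by (auto simp: e_c)
  have "q - c = r *\<^sub>R (e - c)" using r by (simp add: e_c)
  then have q_e: "q - e = (r - 1) *\<^sub>R (e - c)" by (simp add: algebra_simps)
  have "inner (e - c) (p - c) \<le> norm (e - c) * norm (p - c)" by (rule norm_cauchy_schwarz)
  also have "\<dots> \<le> 1" using assms(2) unit by simp
  finally have le1: "inner (e - c) (p - c) \<le> 1" .
  have "p - e = (p - c) - (e - c)" by simp
  then have "inner (e - c) (p - e) = inner (e - c) (p - c) - (norm (e - c))\<^sup>2"
    by (simp add: inner_diff_right power2_norm_eq_inner)
  then have "inner (e - c) (p - e) \<le> 0" using le1 unit by simp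
  then show ?thesis unfolding q_e using r by (simp add: mult_nonneg_nonpos)
qed

section \<open>Coordinates of the three-dimensional configuration\<close>

lemma vec3_eq: "(x::real^3) = y \<longleftrightarrow> x$1 = y$1 \<and> x$2 = y$2 \<and> x$3 = y$3"
  by (simp add: vec_eq_iff forall_3)

lemma inner3: "inner (x::real^3) y = x$1 * y$1 + x$2 * y$2 + x$3 * y$3"
  by (simp add: inner_vec_def sum_3)

definition e3 :: "real^3" where "e3 = vector [0, 0, 1]"
definition horiz :: "real^3 \<Rightarrow> real^3" where "horiz x = x - (x$3) *\<^sub>R e3"

definition offset :: "real^3" where "offset = vector [4, 0, 0]"
definition centre :: "real^3" where "centre = vector [3, 2, 0]"
definition axis1 :: "(real^3) set" where "axis1 = {x. x$1 = 0 \<and> x$2 = 0}"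
definition axis2 :: "(real^3) set" where "axis2 = {x. x$1 = 4 \<and> x$2 = 0}"

lemma e3_comp [simp]: "e3$1 = 0" "e3$2 = 0" "e3$3 = 1"
  by (simp_all add: e3_def)

lemma offset_comp [simp]: "offset$1 = 4" "offset$2 = 0" "offset$3 = 0"
  by (simp_all add: offset_def)

lemma centre_comp [simp]: "centre$1 = 3" "centre$2 = 2" "centre$3 = 0"
  by (simp_all add: centre_def)

lemma horiz_comp [simp]: "(horiz x)$1 = x$1" "(horiz x)$2 = x$2" "(horiz x)$3 = 0"
  by (simp_all add: horiz_def)

lemma horiz_flat: "x$3 = 0 \<Longrightarrow> horiz x = x"
  by (simp add: vec3_eq)

lemma horiz_lift [simp]: "horiz (x + z *\<^sub>R e3) = horiz x"
  by (simp add: vec3_eq)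

lemma horiz_diff: "horiz (x - y) = horiz x - horiz y"
  by (simp add: vec3_eq)

lemma horiz_affine: "horiz (u *\<^sub>R x + v *\<^sub>R y) = u *\<^sub>R horiz x + v *\<^sub>R horiz y"
  by (simp add: vec3_eq)

lemma inner_horiz: "v$3 = 0 \<Longrightarrow> inner v w = inner v (horiz w)"
  by (simp add: inner3)

lemma horiz_plus_height: "horiz x + (x$3) *\<^sub>R e3 = x"
  by (simp add: horiz_def)

lemma axis1_props: "convex axis1" "closed axis1" "axis1 \<noteq> {}"
proof -
  show "convex axis1" unfolding axis1_def convex_def by auto
  show "closed axis1" unfolding axis1_def
    by (intro closed_Collect_conj closed_Collect_eq continuous_intros)
  have "0 \<in> axis1" unfolding axis1_def by simp
  then show "axis1 \<noteq> {}" by auto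
qed

lemma axis2_props: "convex axis2" "closed axis2" "axis2 \<noteq> {}"
proof -
  show "convex axis2" unfolding axis2_def convex_def by (auto simp: algebra_simps)
  show "closed axis2" unfolding axis2_def
    by (intro closed_Collect_conj closed_Collect_eq continuous_intros)
  have "offset \<in> axis2" unfolding axis2_def by simp
  then show "axis2 \<noteq> {}" by auto
qed

lemma closest_point_axis1: "closest_point axis1 x = (x$3) *\<^sub>R e3"
  by (rule closest_point_eqI[OF axis1_props(1,2)]) (auto simp: axis1_def inner3)

lemma closest_point_axis2: "closest_point axis2 x = offset + (x$3) *\<^sub>R e3"
  by (rule closest_point_eqI[OF axis2_props(1,2)]) (auto simp: axis2_def inner3)

definition axes_step :: "real \<Rightarrow> real^3 \<Rightarrow> real^3" where
  "axes_step \<alpha> x = relaxed_proj \<alpha> axis2 (relaxed_proj \<alpha> axis1 x)"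

lemma axes_step_eq:
  "axes_step \<alpha> x = \<alpha> *\<^sub>R offset + (1 - \<alpha>)\<^sup>2 *\<^sub>R horiz x + (x$3) *\<^sub>R e3"
  by (simp add: vec3_eq axes_step_def relaxed_proj_def closest_point_axis1 closest_point_axis2
      power2_eq_square algebra_simps)

text \<open>Given the projection point a onto the third set, the fixed point equation
  x = \<alpha> a + (1 - \<alpha>) axes_step \<alpha> x is linear in x; coordinatewise it reads as follows.\<close>
lemma fixed_eq_iff:
  "x = \<alpha> *\<^sub>R a + (1 - \<alpha>) *\<^sub>R axes_step \<alpha> x \<longleftrightarrow>
     x$1 = \<alpha> * a$1 + (1 - \<alpha>) * (\<alpha> * 4 + (1 - \<alpha>)\<^sup>2 * x$1) \<and>
     x$2 = \<alpha> * a$2 + (1 - \<alpha>) * (\<alpha> * 0 + (1 - \<alpha>)\<^sup>2 * x$2) \<and>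
     x$3 = \<alpha> * a$3 + (1 - \<alpha>) * x$3"
  by (simp add: vec3_eq axes_step_eq)

text \<open>The horizontal coordinates solve a scalar equation whose denominator is
  1 + t + t^2 with t = 1 - \<alpha>; the next three lemmas are the scalar computations.\<close>
definition denom :: "real \<Rightarrow> real" where
  "denom t = 1 + t + t\<^sup>2"

lemma denom_pos: "0 < denom t"
  using zero_le_power2[of "t + 1/2"] by (simp add: denom_def power2_eq_square algebra_simps)

lemma balance_coord_solves:
  "(h + (1 - \<alpha>) * b) / denom (1 - \<alpha>) =
     \<alpha> * h + (1 - \<alpha>) * (\<alpha> * b + (1 - \<alpha>)\<^sup>2 * ((h + (1 - \<alpha>) * b) / denom (1 - \<alpha>)))"
  using denom_pos[of "1 - \<alpha>"]
  by (simp add: field_simps) (simp add: denom_def algebra_simps power2_eq_square)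

lemma balance_coord_unique:
  assumes "\<alpha> \<noteq> 0" "x = \<alpha> * h + (1 - \<alpha>) * (\<alpha> * b + (1 - \<alpha>)\<^sup>2 * x)"
  shows "x = (h + (1 - \<alpha>) * b) / denom (1 - \<alpha>)"
proof -
  have "\<alpha> * (denom (1 - \<alpha>) * x) = \<alpha> * (h + (1 - \<alpha>) * b)"
    using assms(2) unfolding denom_def by algebra
  then have "denom (1 - \<alpha>) * x = h + (1 - \<alpha>) * b" using assms(1) by simp
  then show ?thesis using denom_pos[of "1 - \<alpha>"] by (simp add: field_simps)
qed

lemma balance_coord_residual:
  "\<alpha> * b + (1 - \<alpha>)\<^sup>2 * ((h + (1 - \<alpha>) * b) / denom (1 - \<alpha>)) - h
     = (b - (2 - \<alpha>) * h) / denom (1 - \<alpha>)"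
  using denom_pos[of "1 - \<alpha>"]
  by (simp add: field_simps) (simp add: denom_def algebra_simps power2_eq_square)

text \<open>balance \<alpha> a is the unique solution x of the fixed point equation above.\<close>
definition balance :: "real \<Rightarrow> real^3 \<Rightarrow> real^3" where
  "balance \<alpha> a = (1 / denom (1 - \<alpha>)) *\<^sub>R (horiz a + (1 - \<alpha>) *\<^sub>R offset) + (a$3) *\<^sub>R e3"

lemma balance_comp:
  "(balance \<alpha> a)$1 = (a$1 + (1 - \<alpha>) * 4) / denom (1 - \<alpha>)"
  "(balance \<alpha> a)$2 = (a$2 + (1 - \<alpha>) * 0) / denom (1 - \<alpha>)"
  "(balance \<alpha> a)$3 = a$3"
  by (simp_all add: balance_def divide_inverse)

lemma balance_solves: "balance \<alpha> a = \<alpha> *\<^sub>R a + (1 - \<alpha>) *\<^sub>R axes_step \<alpha> (balance \<alpha> a)"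
  unfolding fixed_eq_iff balance_comp
  by (intro conjI balance_coord_solves) (simp add: algebra_simps)

lemma balance_unique:
  assumes "\<alpha> \<noteq> 0" "x = \<alpha> *\<^sub>R a + (1 - \<alpha>) *\<^sub>R axes_step \<alpha> x"
  shows "x = balance \<alpha> a"
proof -
  have x: "x$1 = \<alpha> * a$1 + (1 - \<alpha>) * (\<alpha> * 4 + (1 - \<alpha>)\<^sup>2 * x$1)"
    "x$2 = \<alpha> * a$2 + (1 - \<alpha>) * (\<alpha> * 0 + (1 - \<alpha>)\<^sup>2 * x$2)"
    "x$3 = \<alpha> * a$3 + (1 - \<alpha>) * x$3"
    using assms(2) unfolding fixed_eq_iff by blast+
  have "\<alpha> * x$3 = \<alpha> * a$3" using x(3) by (simp add: algebra_simps)
  then have "x$3 = a$3" using assms(1) by simp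
  then show ?thesis
    unfolding vec3_eq balance_comp using balance_coord_unique[OF assms(1) x(1)]
      balance_coord_unique[OF assms(1) x(2)] by blast
qed

lemma balance_residual:
  "axes_step \<alpha> (balance \<alpha> a) - a = (1 / denom (1 - \<alpha>)) *\<^sub>R (offset - (2 - \<alpha>) *\<^sub>R horiz a)"
  using balance_coord_residual[of \<alpha> 4 "a$1"] balance_coord_residual[of \<alpha> 0 "a$2"]
  unfolding vec3_eq axes_step_eq by (simp add: balance_comp divide_inverse)

section \<open>The touching point on the unit circle\<close>

text \<open>Along the horizontal line through the origin and offset, the pole of \<alpha> is
  offset / (2 - \<alpha>); touch \<alpha> is the point of the unit circle around centre nearest
  to it.\<close>
definition pole :: "real \<Rightarrow> real^3" where
  "pole \<alpha> = (1 / (2 - \<alpha>)) *\<^sub>R offset"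

definition touch :: "real \<Rightarrow> real^3" where
  "touch \<alpha> = centre + (1 / norm (pole \<alpha> - centre)) *\<^sub>R (pole \<alpha> - centre)"

lemma pole_comp [simp]: "(pole \<alpha>)$1 = 4 / (2 - \<alpha>)" "(pole \<alpha>)$2 = 0" "(pole \<alpha>)$3 = 0"
  by (simp_all add: pole_def)

lemma pole_far: "2 \<le> norm (pole \<alpha> - centre)"
  using component_le_norm_cart[of "pole \<alpha> - centre" 2] by simp

lemma offset_eq_pole: "\<alpha> \<noteq> 2 \<Longrightarrow> offset = (2 - \<alpha>) *\<^sub>R pole \<alpha>"
  by (simp add: pole_def)

lemma touch_flat [simp]: "(touch \<alpha>)$3 = 0"
  by (simp add: touch_def)

lemma touch_unit: "norm (touch \<alpha> - centre) = 1"
  using pole_far[of \<alpha>] by (auto simp: touch_def)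

lemma touch_obtuse: "norm (p - centre) \<le> 1 \<Longrightarrow> inner (pole \<alpha> - touch \<alpha>) (p - touch \<alpha>) \<le> 0"
  unfolding touch_def by (rule radial_point_obtuse) (use pole_far[of \<alpha>] in auto)

lemma touch_continuous: "continuous_on {0..1} touch"
proof -
  have "norm (pole \<alpha> - centre) \<noteq> 0" for \<alpha> using pole_far[of \<alpha>] by linarith
  then show ?thesis unfolding touch_def pole_def
    by (intro continuous_intros) auto
qed

lemma touch_inj: "inj_on touch {0..1}"
proof
  fix \<alpha> \<beta> :: real assume \<alpha>: "\<alpha> \<in> {0..1}" and \<beta>: "\<beta> \<in> {0..1}" and eq: "touch \<alpha> = touch \<beta>"
  define r where "r \<gamma> = norm (pole \<gamma> - centre)" for \<gamma>
  have r: "2 \<le> r \<gamma>" for \<gamma> using pole_far r_def by auto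
  have "(touch \<alpha>)$2 = (touch \<beta>)$2" using eq by simp
  then have "-2 / r \<alpha> = -2 / r \<beta>" by (simp add: touch_def r_def)
  then have r_eq: "r \<alpha> = r \<beta>" using r[of \<alpha>] r[of \<beta>] by (simp add: field_simps)
  have "(touch \<alpha>)$1 = (touch \<beta>)$1" using eq by simp
  then have "(4 / (2 - \<alpha>) - 3) / r \<alpha> = (4 / (2 - \<beta>) - 3) / r \<alpha>"
    by (simp add: touch_def r_def[symmetric] r_eq)
  then have "4 / (2 - \<alpha>) = 4 / (2 - \<beta>)" using r[of \<alpha>] by (simp add: field_simps)
  then show "\<alpha> = \<beta>" using \<alpha> \<beta> by (simp add: field_simps)
qed

lemma residual_towards_pole:
  assumes "0 < \<alpha>" "\<alpha> \<le> 1"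
  obtains c where "0 < c" "axes_step \<alpha> (balance \<alpha> a) - a = c *\<^sub>R (pole \<alpha> - horiz a)"
proof
  show "0 < (2 - \<alpha>) / denom (1 - \<alpha>)" using assms denom_pos[of "1 - \<alpha>"] by simp
  show "axes_step \<alpha> (balance \<alpha> a) - a = ((2 - \<alpha>) / denom (1 - \<alpha>)) *\<^sub>R (pole \<alpha> - horiz a)"
    using assms by (simp add: balance_residual offset_eq_pole[of \<alpha>] scale_right_diff_distrib)
qed

lemma obtuse_on_closed_disc:
  assumes open_disc: "\<And>p. p$3 = 0 \<Longrightarrow> norm (p - centre) < 1 \<Longrightarrow> inner v (p - h) \<le> 0"
    and "q$3 = 0" "norm (q - centre) \<le> 1"
  shows "inner v (q - h) \<le> 0"
proof -
  have "l * inner v (q - centre) \<le> - inner v (centre - h)" if "0 < l" "l < 1" for l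
  proof -
    let ?p = "centre + l *\<^sub>R (q - centre)"
    have "norm (?p - centre) = l * norm (q - centre)" using that by simp
    also have "\<dots> < 1" using mult_left_le[of "norm (q - centre)" l] assms(3) that by linarith
    finally have "norm (?p - centre) < 1" .
    then have "inner v (?p - h) \<le> 0" using open_disc assms(2) by simp
    moreover have "?p - h = (centre - h) + l *\<^sub>R (q - centre)" by simp
    ultimately show ?thesis by (simp add: inner_add_right)
  qed
  then have "inner v (q - centre) \<le> - inner v (centre - h)"
    by (rule field_le_mult_one_interval)
  moreover have "inner v (q - h) = inner v (q - centre) + inner v (centre - h)"
    by (simp add: inner_diff_right)
  ultimately show ?thesis by linarith
qed

section \<open>Fixed points of the three relaxed projections\<close>

text \<open>For them the composition of the three relaxed projections has a
  fixed point exactly when K meets the vertical line over the touching point.\<close>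
locale disc_shadow =
  fixes K :: "(real^3) set"
  assumes convex: "convex K" and closed: "closed K"
    and shadow: "\<And>x. x \<in> K \<Longrightarrow> norm (horiz x - centre) \<le> 1"
    and lift: "\<And>p. p$3 = 0 \<Longrightarrow> norm (p - centre) < 1 \<Longrightarrow> \<exists>z. p + z *\<^sub>R e3 \<in> K"
begin

lemma nonempty: "K \<noteq> {}"
  using lift[of centre] by auto

text \<open>A lift of the touching point into K yields a fixed point: with a on the
  vertical line over touch \<alpha>, the residual at balance \<alpha> a points towards the pole,
  so a is the projection of axes_step \<alpha> (balance \<alpha> a) onto K.\<close>
lemma fixed_point_of_lift:
  assumes "0 < \<alpha>" "\<alpha> \<le> 1" and a: "touch \<alpha> + z *\<^sub>R e3 \<in> K"
  shows "\<exists>x. relaxed_proj \<alpha> K (axes_step \<alpha> x) = x"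
proof (intro exI)
  let ?a = "touch \<alpha> + z *\<^sub>R e3"
  let ?x = "balance \<alpha> ?a"
  obtain c where c: "0 < c" "axes_step \<alpha> ?x - ?a = c *\<^sub>R (pole \<alpha> - touch \<alpha>)"
    using residual_towards_pole[OF assms(1,2), of ?a] by (auto simp: horiz_flat)
  have "closest_point K (axes_step \<alpha> ?x) = ?a"
  proof (rule closest_point_eqI[OF convex closed a])
    fix w assume "w \<in> K"
    then have "inner (pole \<alpha> - touch \<alpha>) (horiz w - touch \<alpha>) \<le> 0"
      using shadow touch_obtuse by blast
    moreover have "inner (pole \<alpha> - touch \<alpha>) (w - ?a) = inner (pole \<alpha> - touch \<alpha>) (horiz w - touch \<alpha>)"
      by (subst inner_horiz) (simp_all add: horiz_diff horiz_flat)
    ultimately show "inner (axes_step \<alpha> ?x - ?a) (w - ?a) \<le> 0"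
      using c by (simp add: mult_nonneg_nonpos)
  qed
  then show "relaxed_proj \<alpha> K (axes_step \<alpha> ?x) = ?x"
    using balance_solves[of \<alpha> ?a] by (simp add: relaxed_proj_def)
qed

text \<open>Conversely, at a fixed point x the projection a onto K satisfies x = balance \<alpha> a.
  Its variational inequality, tested on the lifts of the open disc, says that pole \<alpha>
  lies beyond the disc as seen from horiz a; as touch \<alpha> is the disc point nearest to
  the pole, horiz a = touch \<alpha>.\<close>
lemma lift_of_fixed_point:
  assumes "0 < \<alpha>" "\<alpha> \<le> 1" and fixed: "relaxed_proj \<alpha> K (axes_step \<alpha> x) = x"
  shows "\<exists>z. touch \<alpha> + z *\<^sub>R e3 \<in> K"
proof -
  define a where "a = closest_point K (axes_step \<alpha> x)"
  have aK: "a \<in> K" unfolding a_def using closest_point_in_set[OF closed nonempty] .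
  have "x = balance \<alpha> a"
    using assms(1) fixed by (intro balance_unique) (auto simp: relaxed_proj_def a_def)
  then obtain c where c: "0 < c" "axes_step \<alpha> x - a = c *\<^sub>R (pole \<alpha> - horiz a)"
    using residual_towards_pole[OF assms(1,2)] by blast
  have "inner (pole \<alpha> - horiz a) (p - horiz a) \<le> 0" if p: "p$3 = 0" "norm (p - centre) < 1" for p
  proof -
    obtain z where w: "p + z *\<^sub>R e3 \<in> K" using lift[OF p] by blast
    have "inner (axes_step \<alpha> x - a) (p + z *\<^sub>R e3 - a) \<le> 0"
      unfolding a_def by (rule closest_point_dot[OF convex closed w])
    moreover have "inner (pole \<alpha> - horiz a) (p + z *\<^sub>R e3 - a) = inner (pole \<alpha> - horiz a) (p - horiz a)"
      using p(1) by (subst inner_horiz) (simp_all add: horiz_diff horiz_flat)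
    ultimately show ?thesis using c by (simp add: mult_le_0_iff)
  qed
  then have "inner (pole \<alpha> - horiz a) (touch \<alpha> - horiz a) \<le> 0"
    by (rule obtuse_on_closed_disc) (simp_all add: touch_unit)
  moreover have "inner (pole \<alpha> - touch \<alpha>) (horiz a - touch \<alpha>) \<le> 0"
    using touch_obtuse shadow[OF aK] by blast
  ultimately have "(norm (touch \<alpha> - horiz a))\<^sup>2 \<le> 0"
    unfolding power2_norm_eq_inner by (simp add: algebra_simps)
  then have "a = touch \<alpha> + (a$3) *\<^sub>R e3"
    using horiz_plus_height[of a] by simp
  then show ?thesis using aK by metis
qed

end

section \<open>The third set\<close>

definition stage :: "(nat \<Rightarrow> real set) \<Rightarrow> nat \<Rightarrow> real set" where
  "stage C n = insert 0 (\<Union>j\<le>n. C j \<inter> {0..1})"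

lemma stage_subset: "stage C n \<subseteq> {0..1}"
  by (auto simp: stage_def)

lemma stage_mono: "m \<le> n \<Longrightarrow> stage C m \<subseteq> stage C n"
  unfolding stage_def by (auto intro: order_trans)

lemma stage_compact:
  assumes "\<And>j. closed (C j)"
  shows "compact (stage C n)"
proof -
  have "closed (stage C n)" unfolding stage_def using assms
    by (intro closed_insert closed_UN closed_Int) auto
  then show ?thesis
    using stage_subset compact_Icc by (metis compact_Int_closed inf.absorb_iff2)
qed

lemma mem_union_stages:
  assumes "F = (\<Union>j. C j)" "F \<subseteq> {0..1}" "0 \<in> F"
  shows "\<alpha> \<in> F \<longleftrightarrow> \<alpha> \<in> {0..1} \<and> (\<exists>n. \<alpha> \<in> stage C n)"
  unfolding stage_def using assms by blast

definition margin :: "(nat \<Rightarrow> real set) \<Rightarrow> nat \<Rightarrow> real \<Rightarrow> real" where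
  "margin C n \<beta> = min (1 / (real n + 1)) ((infdist (touch \<beta>) (touch ` stage C n))\<^sup>2 / 2)"

lemma margin_pos:
  assumes "\<And>j. closed (C j)" "\<beta> \<in> {0..1}" "\<beta> \<notin> stage C n"
  shows "0 < margin C n \<beta>"
proof -
  have "compact (touch ` stage C n)"
    using compact_continuous_image[OF continuous_on_subset[OF touch_continuous stage_subset]
        stage_compact[OF assms(1)]] .
  moreover have "touch \<beta> \<notin> touch ` stage C n"
    using assms(2,3) stage_subset[of C n] inj_onD[OF touch_inj] by blast
  moreover have "touch ` stage C n \<noteq> {}" by (simp add: stage_def)
  ultimately have "0 < infdist (touch \<beta>) (touch ` stage C n)"
    by (intro infdist_pos_not_in_closed compact_imp_closed)
  then show ?thesis by (simp add: margin_def)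
qed

lemma margin_le_dist:
  assumes "\<alpha> \<in> stage C n"
  shows "margin C n \<beta> \<le> (dist (touch \<beta>) (touch \<alpha>))\<^sup>2 / 2"
proof -
  have "infdist (touch \<beta>) (touch ` stage C n) \<le> dist (touch \<beta>) (touch \<alpha>)"
    using assms by (intro infdist_le) auto
  then have "(infdist (touch \<beta>) (touch ` stage C n))\<^sup>2 \<le> (dist (touch \<beta>) (touch \<alpha>))\<^sup>2"
    by (intro power_mono infdist_nonneg)
  then show ?thesis by (simp add: margin_def)
qed

text \<open>The affine cut height: it equals n over touch \<beta> and is non-positive where the
  inner product with the radius to touch \<beta> stays margin below 1, in particular
  over the touching points of the n-th stage and deep inside the disc.\<close>
definition cut_height :: "(nat \<Rightarrow> real set) \<Rightarrow> nat \<Rightarrow> real \<Rightarrow> real^3 \<Rightarrow> real" where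
  "cut_height C n \<beta> x = (real n / margin C n \<beta>) *
     (inner (horiz x - centre) (touch \<beta> - centre) - 1 + margin C n \<beta>)"

lemma inner_touch_le: "inner (p - centre) (touch \<beta> - centre) \<le> norm (p - centre)"
  using norm_cauchy_schwarz[of "p - centre" "touch \<beta> - centre"] by (simp add: touch_unit)

lemma cut_height_nonpos:
  assumes "0 < margin C n \<beta>" "inner (horiz x - centre) (touch \<beta> - centre) \<le> 1 - margin C n \<beta>"
  shows "cut_height C n \<beta> x \<le> 0"
  unfolding cut_height_def using assms by (intro mult_nonneg_nonpos) auto

lemma cut_height_le:
  assumes "0 < margin C n \<beta>" "norm (horiz x - centre) \<le> 1"
  shows "cut_height C n \<beta> x \<le> real n"
proof -
  have "inner (horiz x - centre) (touch \<beta> - centre) - 1 + margin C n \<beta> \<le> margin C n \<beta>"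
    using inner_touch_le[of "horiz x" \<beta>] assms(2) by linarith
  then have "cut_height C n \<beta> x \<le> (real n / margin C n \<beta>) * margin C n \<beta>"
    unfolding cut_height_def using assms(1) by (intro mult_left_mono) auto
  then show ?thesis using assms(1) by simp
qed

lemma cut_height_touch:
  assumes "0 < margin C n \<beta>"
  shows "cut_height C n \<beta> (touch \<beta> + z *\<^sub>R e3) = real n"
  using assms by (simp add: cut_height_def horiz_flat touch_unit power2_norm_eq_inner[symmetric])

lemma cut_height_affine:
  assumes "u + v = 1"
  shows "cut_height C n \<beta> (u *\<^sub>R x + v *\<^sub>R y) = u * cut_height C n \<beta> x + v * cut_height C n \<beta> y"
proof -
  let ?g = "\<lambda>x. inner (horiz x - centre) (touch \<beta> - centre) - 1 + margin C n \<beta>"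
  have v: "v = 1 - u" using assms by simp
  have "?g (u *\<^sub>R x + v *\<^sub>R y) = u * ?g x + v * ?g y"
    unfolding horiz_affine v by (simp add: algebra_simps)
  then show ?thesis unfolding cut_height_def by (simp only: distrib_left mult.left_commute)
qed

text \<open>Over touch \<alpha>
  it reaches height n exactly when \<alpha> belongs to the n-th stage.\<close>
definition tower :: "(nat \<Rightarrow> real set) \<Rightarrow> (real^3) set" where
  "tower C = {x. norm (horiz x - centre) \<le> 1 \<and>
     (\<forall>n. \<forall>\<beta> \<in> {0..1} - stage C n. cut_height C n \<beta> x \<le> x$3)}"

lemma tower_convex: "convex (tower C)"
proof (rule convexI)
  fix x y :: "real^3" and u v :: real
  assume x: "x \<in> tower C" and y: "y \<in> tower C" and uv: "0 \<le> u" "0 \<le> v" "u + v = 1"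
  have "horiz (u *\<^sub>R x + v *\<^sub>R y) - centre = u *\<^sub>R (horiz x - centre) + v *\<^sub>R (horiz y - centre)"
    using uv(3) by (simp add: horiz_affine algebra_simps flip: scaleR_add_left)
  then have "norm (horiz (u *\<^sub>R x + v *\<^sub>R y) - centre) \<le> u * norm (horiz x - centre) + v * norm (horiz y - centre)"
    using uv by (metis abs_of_nonneg norm_scaleR norm_triangle_ineq)
  also have "\<dots> \<le> u * 1 + v * 1"
    using x y uv unfolding tower_def by (intro add_mono mult_left_mono) auto
  finally have disc: "norm (horiz (u *\<^sub>R x + v *\<^sub>R y) - centre) \<le> 1" using uv(3) by simp
  have "cut_height C n \<beta> (u *\<^sub>R x + v *\<^sub>R y) \<le> (u *\<^sub>R x + v *\<^sub>R y)$3"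
    if "\<beta> \<in> {0..1} - stage C n" for n \<beta>
  proof -
    have "cut_height C n \<beta> x \<le> x$3" "cut_height C n \<beta> y \<le> y$3" using x y that unfolding tower_def by auto
    then have "u * cut_height C n \<beta> x + v * cut_height C n \<beta> y \<le> u * x$3 + v * y$3"
      using uv by (intro add_mono mult_left_mono) auto
    then show ?thesis using cut_height_affine[OF uv(3)] by simp
  qed
  then show "u *\<^sub>R x + v *\<^sub>R y \<in> tower C" unfolding tower_def using disc by blast
qed

lemma tower_closed: "closed (tower C)"
proof -
  have "closed {x. cut_height C n \<beta> x \<le> x$3}" for n \<beta>
    unfolding cut_height_def horiz_def by (intro closed_Collect_le continuous_intros)
  then have "closed (\<Inter>n. \<Inter>\<beta> \<in> {0..1} - stage C n. {x. cut_height C n \<beta> x \<le> x$3})"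
    by blast
  moreover have "closed {x::real^3. norm (horiz x - centre) \<le> 1}"
    unfolding horiz_def by (intro closed_Collect_le continuous_intros)
  moreover have "tower C = {x. norm (horiz x - centre) \<le> 1} \<inter>
      (\<Inter>n. \<Inter>\<beta> \<in> {0..1} - stage C n. {x. cut_height C n \<beta> x \<le> x$3})"
    unfolding tower_def by blast
  ultimately show ?thesis by (simp add: closed_Int)
qed

context
  fixes C :: "nat \<Rightarrow> real set"
  assumes closed_C: "\<And>j. closed (C j)"
begin

text \<open>Over the touching point of a parameter of the m-th stage the tower contains the
  point at height m: earlier cuts are at most n < m there, later ones non-positive.\<close>
lemma tower_over_stage:
  assumes "\<alpha> \<in> stage C m"
  shows "touch \<alpha> + real m *\<^sub>R e3 \<in> tower C"
proof -
  let ?x = "touch \<alpha> + real m *\<^sub>R e3"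
  have "cut_height C n \<beta> ?x \<le> real m" if \<beta>: "\<beta> \<in> {0..1} - stage C n" for n \<beta>
  proof -
    have m: "0 < margin C n \<beta>" using \<beta> by (intro margin_pos[OF closed_C]) auto
    show ?thesis
    proof (cases "m \<le> n")
      case True
      then have "\<alpha> \<in> stage C n" using stage_mono assms by blast
      then have "margin C n \<beta> \<le> (dist (touch \<beta>) (touch \<alpha>))\<^sup>2 / 2" by (rule margin_le_dist)
      then have "inner (horiz ?x - centre) (touch \<beta> - centre) \<le> 1 - margin C n \<beta>"
        using inner_unit_sphere[OF touch_unit touch_unit, of \<alpha> \<beta>]
        by (simp add: horiz_flat dist_commute)
      then have "cut_height C n \<beta> ?x \<le> 0" by (rule cut_height_nonpos[OF m])
      then show ?thesis by simp
    next
      case False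
      have "cut_height C n \<beta> ?x \<le> real n"
        using m by (rule cut_height_le) (simp add: horiz_flat touch_unit)
      then show ?thesis using False by simp
    qed
  qed
  then show ?thesis unfolding tower_def by (simp add: horiz_flat touch_unit)
qed

text \<open>Conversely, a point of the tower over touch \<alpha> puts \<alpha> into some stage:
  otherwise the cut with n above its height would exclude it.\<close>
lemma stage_of_tower:
  assumes "touch \<alpha> + z *\<^sub>R e3 \<in> tower C" "\<alpha> \<in> {0..1}"
  shows "\<exists>n. \<alpha> \<in> stage C n"
proof (rule ccontr)
  assume "\<nexists>n. \<alpha> \<in> stage C n"
  then have \<alpha>: "\<alpha> \<in> {0..1} - stage C n" for n using assms(2) by blast
  define n where "n = nat \<lceil>z\<rceil> + 1"
  have "cut_height C n \<alpha> (touch \<alpha> + z *\<^sub>R e3) \<le> z"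
    using assms(1) \<alpha> unfolding tower_def by auto
  moreover have "cut_height C n \<alpha> (touch \<alpha> + z *\<^sub>R e3) = real n"
    using \<alpha> by (intro cut_height_touch margin_pos[OF closed_C]) auto
  ultimately show False unfolding n_def by linarith
qed

text \<open>Every point of the open disc lifts into the tower: at distance \<rho> < 1 from
  centre all cuts with 1/(n+1) \<le> 1 - \<rho> are non-positive, the others at most n.\<close>
lemma tower_lift:
  assumes "p$3 = 0" "norm (p - centre) < 1"
  shows "\<exists>z. p + z *\<^sub>R e3 \<in> tower C"
proof -
  define \<rho> where "\<rho> = norm (p - centre)"
  define N where "N = nat \<lceil>1 / (1 - \<rho>)\<rceil>"
  have \<rho>: "\<rho> < 1" using assms(2) by (simp add: \<rho>_def)
  have N: "1 / (real N + 1) \<le> 1 - \<rho>"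
  proof -
    have "1 / (1 - \<rho>) \<le> real N + 1" unfolding N_def by linarith
    then show ?thesis using \<rho> by (simp add: field_simps)
  qed
  let ?x = "p + real N *\<^sub>R e3"
  have "cut_height C n \<beta> ?x \<le> real N" if \<beta>: "\<beta> \<in> {0..1} - stage C n" for n \<beta>
  proof -
    have m: "0 < margin C n \<beta>" using \<beta> by (intro margin_pos[OF closed_C]) auto
    show ?thesis
    proof (cases "N \<le> n")
      case True
      have "margin C n \<beta> \<le> 1 / (real n + 1)" by (simp add: margin_def)
      also have "\<dots> \<le> 1 / (real N + 1)" using True by (simp add: frac_le)
      finally have "inner (horiz ?x - centre) (touch \<beta> - centre) \<le> 1 - margin C n \<beta>"
        using N inner_touch_le[of p \<beta>] assms(1) by (simp add: horiz_flat \<rho>_def)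
      then have "cut_height C n \<beta> ?x \<le> 0" by (rule cut_height_nonpos[OF m])
      then show ?thesis by simp
    next
      case False
      have "cut_height C n \<beta> ?x \<le> real n"
        using m assms by (intro cut_height_le) (auto simp: horiz_flat)
      then show ?thesis using False by simp
    qed
  qed
  then have "?x \<in> tower C" unfolding tower_def using assms by (simp add: horiz_flat)
  then show ?thesis by blast
qed

lemma tower_disc_shadow: "disc_shadow (tower C)"
proof
  show "\<And>x. x \<in> tower C \<Longrightarrow> norm (horiz x - centre) \<le> 1" by (simp add: tower_def)
qed (simp_all add: tower_convex tower_closed tower_lift)

lemma fixed_point_iff_stage:
  assumes "0 < \<alpha>" "\<alpha> \<le> 1"
  shows "(\<exists>x. relaxed_proj \<alpha> (tower C) (axes_step \<alpha> x) = x) \<longleftrightarrow> (\<exists>n. \<alpha> \<in> stage C n)"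
proof -
  interpret disc_shadow "tower C" by (rule tower_disc_shadow)
  show ?thesis
  proof
    assume "\<exists>x. relaxed_proj \<alpha> (tower C) (axes_step \<alpha> x) = x"
    then obtain z where "touch \<alpha> + z *\<^sub>R e3 \<in> tower C"
      using lift_of_fixed_point[OF assms] by blast
    then show "\<exists>n. \<alpha> \<in> stage C n" using stage_of_tower assms by simp
  next
    assume "\<exists>n. \<alpha> \<in> stage C n"
    then obtain n where "touch \<alpha> + real n *\<^sub>R e3 \<in> tower C"
      using tower_over_stage by blast
    then show "\<exists>x. relaxed_proj \<alpha> (tower C) (axes_step \<alpha> x) = x"
      by (rule fixed_point_of_lift[OF assms])
  qed
qed

end

theorem proposition2:
  fixes F :: "real set" and k :: nat
  assumes "fsigma F" and "F \<subseteq> {0..1}" and "0 \<in> F" and "k \<ge> 3"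
  shows "\<exists>A :: nat \<Rightarrow> (real ^ 3) set.
           (\<forall>i\<in>{1..k}. A i \<noteq> {} \<and> convex (A i) \<and> closed (A i)) \<and>
           F = {\<alpha> \<in> {0..1}. \<exists>x. comp_relaxed \<alpha> A k x = x}"
proof -
  obtain C :: "nat \<Rightarrow> real set" where F: "F = (\<Union>j. C j)" and closed_C: "\<And>j. closed (C j)"
    using assms(1) by (auto elim: fsigma.cases)
  define A :: "nat \<Rightarrow> (real^3) set" where
    "A i = (if i = 1 then axis1 else if i = 2 then axis2 else if i = 3 then tower C else UNIV)" for i
  have sets: "\<forall>i\<in>{1..k}. A i \<noteq> {} \<and> convex (A i) \<and> closed (A i)"
    using axis1_props axis2_props disc_shadow.nonempty[OF tower_disc_shadow[OF closed_C]]
      tower_convex tower_closed by (auto simp: A_def)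
  have comp: "comp_relaxed \<alpha> A k x = relaxed_proj \<alpha> (tower C) (axes_step \<alpha> x)" for \<alpha> x
  proof -
    have "comp_relaxed \<alpha> A k = comp_relaxed \<alpha> A 3"
      using assms(4) by (intro comp_relaxed_UNIV_tail) (auto simp: A_def)
    then show ?thesis by (simp add: numeral_3_eq_3 A_def axes_step_def)
  qed
  have "\<alpha> \<in> F \<longleftrightarrow> \<alpha> \<in> {0..1} \<and> (\<exists>x. comp_relaxed \<alpha> A k x = x)" for \<alpha>
  proof (cases "\<alpha> = 0")
    case True
    then show ?thesis using assms(3) by (simp add: comp_relaxed_zero)
  next
    case False
    have "\<alpha> \<in> F \<longleftrightarrow> \<alpha> \<in> {0..1} \<and> (\<exists>n. \<alpha> \<in> stage C n)"
      by (rule mem_union_stages[OF F assms(2,3)])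
    also have "\<dots> \<longleftrightarrow> \<alpha> \<in> {0..1} \<and> (\<exists>x. comp_relaxed \<alpha> A k x = x)"
      using fixed_point_iff_stage[where C=C, OF closed_C, of \<alpha>] False unfolding comp by auto
    finally show ?thesis .
  qed
  then show ?thesis using sets by blast
qed

end
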